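(* Let $X\subset\mathbb{R}^{n_x}$, $Y\subset\mathbb{R}^{n_y}$ with $Y$ compact, and let $f:X\times Y\to\mathbb{R}^{n_x}$, $g:X\times Y\to\mathbb{R}^{n_y}$ be continuously differentiable. Suppose $y^*$ is a globally asymptotically stable equilibrium of $\dot y(t)=g(x^*,y(t))$, and that $f$ satisfies: there exist a candidate Lyapunov function $U$ for $x^*$ and a positive definite function $\sigma$ with $\sigma(|x-x^*|)\le\inf_{y\in Y}-\langle\nabla U(x),f(x,y)\rangle$ for all $x\in X$. Then $(x^*,y^* )$ is a globally asymptotically stable equilibrium of the system $\dot x=f(x,y)$, $\dot y=g(x,y)$ (with the norm $|z|=|x|+|y|$ for $z=(x,y)$).
   Context: A function $\alpha:\mathbb{R}_{\ge0}\to\mathbb{R}_{\ge0}$ is of class $\mathcal K_\infty$ if it is continuous, zero at zero, strictly increasing and unbounded; $W:\mathbb{R}_{\ge0}\to\mathbb{R}_{\ge0}$ is positive definite if continuous, $W(0)=0$ and $W(c)>0$ for $c>0$. A candidate Lyapunov function for $x^*$ is a continuously differentiable $U:X\to[0,\infty)$ with $\alpha_1(|x-x^*|)\le U(x)\le\alpha_2(|x-x^*|)$ for some $\alpha_1,\alpha_2\in\mathcal K_\infty$ and $U(x)\ge W(|x-x^*|)$ for some positive definite $W$. For $\dot z=h(z,t)$ with solutions $z(t;z_0,t_0)$, an equilibrium $z^*$ is globally asymptotically stable if (1) for each $\eta>0$ there is $\delta>0$ independent of $t_0$ with $|z_0-z^*|<\delta\Rightarrow|z(t;z_0,t_0)-z^*|<\eta$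 for all $t\ge t_0\ge0$, and (2) for all $\eta,\rho>0$ there is $T(\rho,\eta)<\infty$ independent of $t_0$ with $|z(t;z_0,t_0)-z^*|<\eta$ for $t\ge t_0+T$ whenever $|z_0-z^*|<\rho$. *)

theory Defs
  imports "HOL-Analysis.Analysis"
begin

definition class_K_inf :: "(real \<Rightarrow> real) \<Rightarrow> bool" where
  "class_K_inf \<alpha> \<longleftrightarrow>
     continuous_on {0..} \<alpha> \<and> \<alpha> 0 = 0 \<and> (\<forall>c\<ge>0. \<alpha> c \<ge> 0) \<and>
     strict_mono_on {0..} \<alpha> \<and> (\<forall>M. \<exists>c\<ge>0. \<alpha> c > M)"

definition pos_def_fun :: "(real \<Rightarrow> real) \<Rightarrow> bool" where
  "pos_def_fun W \<longleftrightarrow>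
     continuous_on {0..} W \<and> W 0 = 0 \<and> (\<forall>c\<ge>0. W c \<ge> 0) \<and> (\<forall>c>0. W c > 0)"

definition C1_on :: "'a::real_normed_vector set \<Rightarrow> ('a \<Rightarrow> 'b::real_normed_vector) \<Rightarrow> bool" where
  "C1_on S F \<longleftrightarrow> (\<exists>F'. (\<forall>z\<in>S. (F has_derivative blinfun_apply (F' z)) (at z within S))
                        \<and> continuous_on S F')"

definition candidate_lyapunov ::
  "'a::euclidean_space set \<Rightarrow> 'a \<Rightarrow> ('a \<Rightarrow> real) \<Rightarrow> ('a \<Rightarrow> 'a) \<Rightarrow> bool" where
  "candidate_lyapunov X xstar U DU \<longleftrightarrow>
     (\<forall>x\<in>X. (U has_derivative (\<lambda>h. DU x \<bullet> h)) (at x within X)) \<and>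
     continuous_on X DU \<and>
     (\<forall>x\<in>X. U x \<ge> 0) \<and>
     (\<exists>\<alpha>1 \<alpha>2. class_K_inf \<alpha>1 \<and> class_K_inf \<alpha>2 \<and>
        (\<forall>x\<in>X. \<alpha>1 (norm (x - xstar)) \<le> U x \<and> U x \<le> \<alpha>2 (norm (x - xstar)))) \<and>
     (\<exists>W. pos_def_fun W \<and> (\<forall>x\<in>X. U x \<ge> W (norm (x - xstar))))"

definition is_solution ::
  "('z::real_normed_vector \<Rightarrow> real \<Rightarrow> 'z) \<Rightarrow> 'z set \<Rightarrow> (real \<Rightarrow> 'z) \<Rightarrow> 'z \<Rightarrow> real \<Rightarrow> bool" where
  "is_solution h D z z0 t0 \<longleftrightarrow>
     z t0 = z0 \<and>
     (\<forall>t\<ge>t0. z t \<in> D \<and> (z has_vector_derivative h (z t) t) (at t within {t0..}))"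

definition gas ::
  "('z::real_normed_vector \<Rightarrow> real \<Rightarrow> 'z) \<Rightarrow> 'z set \<Rightarrow> ('z \<Rightarrow> real) \<Rightarrow> 'z \<Rightarrow> bool" where
  "gas h D d zstar \<longleftrightarrow>
     zstar \<in> D \<and>
     (\<forall>\<eta>>0. \<exists>\<delta>>0. \<forall>z z0 t0. t0 \<ge> 0 \<longrightarrow> is_solution h D z z0 t0 \<longrightarrow> d z0 < \<delta> \<longrightarrow>
         (\<forall>t\<ge>t0. d (z t) < \<eta>)) \<and>
     (\<forall>\<eta>>0. \<forall>\<rho>>0. \<exists>T. \<forall>z z0 t0. t0 \<ge> 0 \<longrightarrow> is_solution h D z z0 t0 \<longrightarrow> d z0 < \<rho> \<longrightarrow>
         (\<forall>t\<ge>t0 + T. d (z t) < \<eta>))"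

end

theory Submission
  imports Defs "HOL-Library.Diagonal_Subsequence" "HOL-Complex_Analysis.Great_Picard"
begin

text \<open>Along every solution the Lyapunov function U decreases at rate \<sigma>(|x - x*|), whatever y is,
  so the x-component converges to x* uniformly in the initial time. Since Y is compact, g(x, y) is
  uniformly close to g(x*, y) for x near x*, so from then on the y-component is an
  \<epsilon>-approximate solution of the nominal system y' = g(x*, y). It remains to see that the
  uniform global asymptotic stability of y* survives such perturbations for small \<epsilon>. If
  not, there are approximate solutions with \<epsilon> \<rightarrow> 0 that misbehave; they are
  equi-Lipschitz with values in Y, so by Arzela-Ascoli and a diagonal argument a subsequence
  converges locally uniformly, and its limit is an exact solution of the nominal system, to which
  the hypothesis applies.\<close>

section \<open>Calculus and compactness on the half-line\<close>

lemma has_vector_derivative_linearization_bound: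
  fixes y :: "real \<Rightarrow> 'b::real_normed_vector"
  assumes "convex S" "a \<in> S" "b \<in> S"
    and der: "\<And>s. s \<in> S \<Longrightarrow> \<exists>v. (y has_vector_derivative v) (at s within S) \<and> norm (v - c) \<le> B"
  shows "norm (y b - y a - (b - a) *\<^sub>R c) \<le> B * \<bar>b - a\<bar>"
proof -
  obtain D where D: "\<And>s. s \<in> S \<Longrightarrow> (y has_vector_derivative D s) (at s within S) \<and> norm (D s - c) \<le> B"
    using der by metis
  have "((\<lambda>s. y s - s *\<^sub>R c) has_derivative (\<lambda>h. h *\<^sub>R (D s - c))) (at s within S)" if "s \<in> S" for s
    using D[OF that] unfolding has_vector_derivative_def
    by (auto intro!: derivative_eq_intros simp: algebra_simps)
  moreover have "onorm (\<lambda>h::real. h *\<^sub>R (D s - c)) \<le> B" if "s \<in> S" for s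
    using D[OF that] by (simp add: onorm_scaleR_left[OF bounded_linear_ident] onorm_id)
  ultimately have "norm ((y b - b *\<^sub>R c) - (y a - a *\<^sub>R c)) \<le> B * norm (b - a)"
    by (rule differentiable_bound[OF \<open>convex S\<close> _ _ \<open>b \<in> S\<close> \<open>a \<in> S\<close>])
  then show ?thesis
    by (simp add: algebra_simps)
qed

lemma has_vector_derivative_shift:
  assumes "(y has_vector_derivative v) (at (s + t) within {t0..})" "t0 \<le> s"
  shows "((\<lambda>t. y (s + t)) has_vector_derivative v) (at t within {0..})"
proof -
  have "(\<lambda>t. s + t) ` {0..} \<subseteq> {t0..}"
    using \<open>t0 \<le> s\<close> by auto
  with assms(1) have "(y has_vector_derivative v) (at (s + t) within (\<lambda>t. s + t) ` {0..})"
    by (rule has_vector_derivative_within_subset)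
  moreover have "((\<lambda>t. s + t) has_vector_derivative 1) (at t within {0..})"
    by (auto intro!: derivative_eq_intros)
  ultimately show ?thesis
    using vector_diff_chain_within[of "\<lambda>t. s + t" 1 t "{0..}" y v] by (simp add: o_def)
qed

lemma has_vector_derivative_fst:
  "(z has_vector_derivative v) F \<Longrightarrow> ((\<lambda>t. fst (z t)) has_vector_derivative fst v) F"
  unfolding has_vector_derivative_def by (drule has_derivative_fst) simp

lemma has_vector_derivative_snd:
  "(z has_vector_derivative v) F \<Longrightarrow> ((\<lambda>t. snd (z t)) has_vector_derivative snd v) F"
  unfolding has_vector_derivative_def by (drule has_derivative_snd) simp

lemma C1_on_imp_continuous_on: "C1_on S F \<Longrightarrow> continuous_on S F"
  unfolding C1_on_def continuous_on_eq_continuous_within by (metis has_derivative_continuous)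

lemma uniformly_close_on_compact_fibre:
  fixes G :: "'a::euclidean_space \<Rightarrow> 'b::euclidean_space \<Rightarrow> 'c::real_normed_vector"
  assumes "compact Y" and cont: "continuous_on (X \<times> Y) (\<lambda>z. G (fst z) (snd z))"
    and "x0 \<in> X" "0 < e"
  obtains r where "0 < r" "\<And>x y. x \<in> X \<Longrightarrow> y \<in> Y \<Longrightarrow> norm (x - x0) < r \<Longrightarrow> norm (G x y - G x0 y) < e"
proof (cases "Y = {}")
  case True
  then show ?thesis
    using that[of 1] by simp
next
  case False
  \<comment> \<open>The library's tube lemma has the compact factor first, hence the product Y \<times> X.\<close>
  define D where "D p = G (snd p) (fst p) - G x0 (fst p)" for p :: "'b \<times> 'a"
  have "continuous_on (Y \<times> X) (\<lambda>p. (\<lambda>z. G (fst z) (snd z)) (snd p, fst p))"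
    by (rule continuous_on_compose2[OF cont]) (auto intro!: continuous_intros)
  moreover have "continuous_on (Y \<times> X) (\<lambda>p. (\<lambda>z. G (fst z) (snd z)) (x0, fst p))"
    by (rule continuous_on_compose2[OF cont]) (use \<open>x0 \<in> X\<close> in \<open>auto intro!: continuous_intros\<close>)
  ultimately have "continuous_on (Y \<times> X) D"
    unfolding D_def by (auto intro: continuous_on_diff)
  then have "openin (top_of_set (Y \<times> X)) ((Y \<times> X) \<inter> D -` ball 0 e)"
    by (rule continuous_openin_preimage_gen) simp
  moreover have "(\<lambda>y. (y, x0)) ` Y \<subseteq> (Y \<times> X) \<inter> D -` ball 0 e"
    using \<open>x0 \<in> X\<close> \<open>0 < e\<close> by (auto simp: D_def)
  ultimately obtain V where "openin (top_of_set X) V" "x0 \<in> V" and V: "Y \<times> V \<subseteq> D -` ball 0 e"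
    using Retracts.tube_lemma[OF \<open>compact Y\<close> False] by (metis le_inf_iff)
  then obtain r where "0 < r" and r: "\<And>x. x \<in> X \<Longrightarrow> dist x x0 < r \<Longrightarrow> x \<in> V"
    unfolding openin_euclidean_subtopology_iff by metis
  show ?thesis
  proof (rule that[OF \<open>0 < r\<close>])
    fix x y assume "x \<in> X" "y \<in> Y" "norm (x - x0) < r"
    then have "(y, x) \<in> D -` ball 0 e"
      using V r[of x] by (auto simp: dist_norm)
    then show "norm (G x y - G x0 y) < e"
      by (simp add: D_def)
  qed
qed

lemma Arzela_Ascoli_lipschitz:
  fixes F :: "nat \<Rightarrow> 'a::euclidean_space \<Rightarrow> 'b::{real_normed_vector,heine_borel}"
  assumes "compact S" and bound: "\<And>n x. x \<in> S \<Longrightarrow> norm (F n x) \<le> B"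
    and lip: "\<And>n. L-lipschitz_on S (F n)"
  obtains r w where "strict_mono r" "uniform_limit S (F \<circ> r) w sequentially"
proof -
  have "0 \<le> L"
    using lip lipschitz_on_nonneg by blast
  obtain w r where "strict_mono (r :: nat \<Rightarrow> nat)"
    and w: "\<And>e. 0 < e \<Longrightarrow> \<exists>N. \<forall>n x. n \<ge> N \<and> x \<in> S \<longrightarrow> norm (F (r n) x - w x) < e"
  proof (rule Arzela_Ascoli[OF \<open>compact S\<close> bound])
    show "\<exists>d>0. \<forall>n y. y \<in> S \<and> norm (x - y) < d \<longrightarrow> norm (F n x - F n y) < e"
      if "x \<in> S" "0 < e" for x e
    proof (intro exI conjI allI impI)
      show "0 < e / (L + 1)"
        using \<open>0 < e\<close> \<open>0 \<le> L\<close> by simp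
      fix n y assume y: "y \<in> S \<and> norm (x - y) < e / (L + 1)"
      have "norm (F n x - F n y) \<le> L * norm (x - y)"
        using lipschitz_on_normD[OF lip] that y by simp
      also have "\<dots> \<le> (L + 1) * norm (x - y)"
        by (simp add: mult_right_mono)
      also have "\<dots> < e"
        using y \<open>0 \<le> L\<close> by (simp add: pos_less_divide_eq mult.commute)
      finally show "norm (F n x - F n y) < e" .
    qed
  qed auto
  have "uniform_limit S (F \<circ> r) w sequentially"
    unfolding uniform_limit_sequentially_iff dist_norm using w by (metis comp_apply)
  with \<open>strict_mono r\<close> show ?thesis
    by (rule that)
qed

lemma uniform_limit_sequentially_shift:
  "uniform_limit S (\<lambda>n. f (n + k)) l sequentially \<longleftrightarrow> uniform_limit S f l sequentially"
proof -
  have "(\<forall>\<^sub>F n in sequentially. \<forall>x\<in>S. dist (f (n + k) x) (l x) < e) \<longleftrightarrow>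
      (\<forall>\<^sub>F n in sequentially. \<forall>x\<in>S. dist (f n x) (l x) < e)" for e
    using eventually_sequentially_seg[of "\<lambda>n. \<forall>x\<in>S. dist (f n x) (l x) < e" k] by simp
  then show ?thesis
    unfolding uniform_limit_iff by simp
qed

lemma uniform_limit_on_all_Icc:
  fixes f :: "nat \<Rightarrow> real \<Rightarrow> 'b::metric_space"
  assumes "\<And>K::nat. \<exists>v. uniform_limit {0..real K} f v sequentially"
  obtains w where "\<And>K. uniform_limit {0..K} f w sequentially"
proof -
  obtain v where v: "\<And>K::nat. uniform_limit {0..real K} f (v K) sequentially"
    using assms by metis
  define w where "w t = lim (\<lambda>n. f n t)" for t
  have "uniform_limit {0..K} f w sequentially" for K
  proof -
    have "v (nat \<lceil>K\<rceil>) t = w t" if "t \<in> {0..real (nat \<lceil>K\<rceil>)}" for t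
      using tendsto_uniform_limitI[OF v that] unfolding w_def by (simp add: limI)
    then have "uniform_limit {0..real (nat \<lceil>K\<rceil>)} f w sequentially"
      using v uniform_limit_cong'[of "{0..real (nat \<lceil>K\<rceil>)}" f f] by blast
    then show ?thesis
      by (rule uniform_limit_on_subset) (auto intro: order_trans[OF _ real_nat_ceiling_ge])
  qed
  then show ?thesis
    by (rule that)
qed

lemma Arzela_Ascoli_halfline:
  fixes F :: "nat \<Rightarrow> real \<Rightarrow> 'a::euclidean_space"
  assumes bound: "\<And>n t. 0 \<le> t \<Longrightarrow> norm (F n t) \<le> B"
    and lip: "\<And>n. L-lipschitz_on {0..} (F n)"
  obtains r w where "strict_mono r" "\<And>K. uniform_limit {0..K} (F \<circ> r) w sequentially"
proof -
  define P where "P K r \<longleftrightarrow> (\<exists>w. uniform_limit {0..real K} (F \<circ> r) w sequentially)"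
    for K :: nat and r :: "nat \<Rightarrow> nat"
  have "\<exists>k. strict_mono k \<and> P K (s \<circ> k)" for K and s :: "nat \<Rightarrow> nat"
  proof -
    obtain k w where "strict_mono k" "uniform_limit {0..real K} ((F \<circ> s) \<circ> k) w sequentially"
    proof (rule Arzela_Ascoli_lipschitz[of "{0..real K}" "F \<circ> s" B L])
      show "norm ((F \<circ> s) n t) \<le> B" if "t \<in> {0..real K}" for n t
        using bound that by simp
      show "L-lipschitz_on {0..real K} ((F \<circ> s) n)" for n
        using lipschitz_on_subset[OF lip[of "s n"], of "{0..real K}"] by simp
    qed auto
    then show ?thesis
      unfolding P_def by (auto simp: o_assoc)
  qed
  then interpret subseqs P
    by unfold_locales
  have "P K (s \<circ> r)" if "strict_mono r" "P K s" for K r s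
  proof -
    from \<open>P K s\<close> obtain u where "uniform_limit {0..real K} (F \<circ> s) u sequentially"
      unfolding P_def by blast
    then have "uniform_limit {0..real K} (\<lambda>n. (F \<circ> s) (r n)) u sequentially"
      by (rule filterlim_compose[OF _ filterlim_subseq[OF \<open>strict_mono r\<close>]])
    then show ?thesis
      unfolding P_def o_def by blast
  qed
  then have "P K (diagseq \<circ> (+) (Suc K))" for K
    by (rule diagseq_holds)
  have limits: "\<exists>v. uniform_limit {0..real K} (F \<circ> diagseq) v sequentially" for K
  proof -
    from \<open>P K (diagseq \<circ> (+) (Suc K))\<close> obtain v
      where "uniform_limit {0..real K} (F \<circ> (diagseq \<circ> (+) (Suc K))) v sequentially"
      unfolding P_def by blast
    moreover have "F \<circ> (diagseq \<circ> (+) (Suc K)) = (\<lambda>n. (F \<circ> diagseq) (n + Suc K))"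
      by (simp add: fun_eq_iff add.commute)
    ultimately have "uniform_limit {0..real K} (\<lambda>n. (F \<circ> diagseq) (n + Suc K)) v sequentially"
      by simp
    then show ?thesis
      unfolding uniform_limit_sequentially_shift by blast
  qed
  obtain w where "\<And>K. uniform_limit {0..K} (F \<circ> diagseq) w sequentially"
    by (fact uniform_limit_on_all_Icc[OF limits])
  with subseq_diagseq show ?thesis
    by (rule that)
qed

section \<open>Approximate solutions of an autonomous system\<close>

definition approx_solution :: "('b::real_normed_vector \<Rightarrow> 'b) \<Rightarrow> 'b set \<Rightarrow> real \<Rightarrow> (real \<Rightarrow> 'b) \<Rightarrow> bool" where
  "approx_solution G Y \<epsilon> y \<longleftrightarrow>
     (\<forall>t\<ge>0. y t \<in> Y \<and> (\<exists>v. (y has_vector_derivative v) (at t within {0..}) \<and> norm (v - G (y t)) \<le> \<epsilon>))"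

lemma approx_solutionD:
  assumes "approx_solution G Y \<epsilon> y" "0 \<le> t"
  obtains v where "y t \<in> Y" "(y has_vector_derivative v) (at t within {0..})" "norm (v - G (y t)) \<le> \<epsilon>"
  using assms unfolding approx_solution_def by blast

lemma approx_solution_mono:
  "approx_solution G Y \<epsilon> y \<Longrightarrow> \<epsilon> \<le> \<epsilon>' \<Longrightarrow> approx_solution G Y \<epsilon>' y"
  unfolding approx_solution_def by (meson order_trans)

lemma approx_solution_shift:
  assumes "approx_solution G Y \<epsilon> y" "0 \<le> s"
  shows "approx_solution G Y \<epsilon> (\<lambda>t. y (s + t))"
  unfolding approx_solution_def
proof (intro allI impI conjI)
  fix t :: real assume "0 \<le> t"
  with assms obtain v where "y (s + t) \<in> Y" and v: "norm (v - G (y (s + t))) \<le> \<epsilon>"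
    and "(y has_vector_derivative v) (at (s + t) within {0..})"
    by (metis add_nonneg_nonneg approx_solutionD)
  with \<open>0 \<le> s\<close> show "\<exists>v. ((\<lambda>t. y (s + t)) has_vector_derivative v) (at t within {0..}) \<and>
      norm (v - G (y (s + t))) \<le> \<epsilon>"
    by (blast intro: has_vector_derivative_shift)
  show "y (s + t) \<in> Y"
    by fact
qed

lemma approx_solution_lipschitz:
  assumes "approx_solution G Y \<epsilon> y" "\<And>z. z \<in> Y \<Longrightarrow> norm (G z) \<le> M"
  shows "(M + \<epsilon>)-lipschitz_on {0..} y"
proof -
  have speed: "\<exists>v. (y has_vector_derivative v) (at u within {0..}) \<and> norm (v - 0) \<le> M + \<epsilon>"
    if "u \<in> {0..}" for u
  proof -
    from that have "0 \<le> u" by simp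
    then obtain v where "y u \<in> Y" and v: "(y has_vector_derivative v) (at u within {0..})"
      and "norm (v - G (y u)) \<le> \<epsilon>"
      by (rule approx_solutionD[OF assms(1)])
    moreover have "norm v \<le> norm (G (y u)) + norm (v - G (y u))"
      by (rule norm_triangle_sub)
    ultimately have "norm v \<le> M + \<epsilon>"
      using assms(2) by fastforce
    with v show ?thesis
      by auto
  qed
  show ?thesis
  proof (rule lipschitz_onI)
    show "dist (y s) (y t) \<le> (M + \<epsilon>) * dist s t" if "s \<in> {0..}" "t \<in> {0..}" for s t
      using has_vector_derivative_linearization_bound[of "{0..}" t s y 0 "M + \<epsilon>"] speed that
      by (simp add: dist_norm)
    show "0 \<le> M + \<epsilon>"
      using speed[of 0] by (auto intro: order_trans[OF norm_ge_zero])
  qed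
qed

lemma uniform_limit_of_approx_velocities:
  fixes G :: "'b::metric_space \<Rightarrow> 'c::real_normed_vector"
  assumes "compact Y" "continuous_on Y G"
    and inY: "\<And>n s. s \<in> S \<Longrightarrow> y n s \<in> Y" "\<And>s. s \<in> S \<Longrightarrow> w s \<in> Y"
    and D: "\<And>n s. s \<in> S \<Longrightarrow> norm (D n s - G (y n s)) \<le> \<epsilon> n" and "\<epsilon> \<longlonglongrightarrow> 0"
    and lim: "uniform_limit S y w sequentially"
  shows "uniform_limit S D (\<lambda>s. G (w s)) sequentially"
proof (rule uniform_limitI)
  fix e :: real assume "0 < e"
  obtain d where "0 < d" and d: "\<And>a b. a \<in> Y \<Longrightarrow> b \<in> Y \<Longrightarrow> dist a b < d \<Longrightarrow> dist (G a) (G b) < e / 2"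
    using compact_uniformly_continuous[OF \<open>continuous_on Y G\<close> \<open>compact Y\<close>] \<open>0 < e\<close>
    unfolding uniformly_continuous_on_def by (metis half_gt_zero)
  have "\<forall>\<^sub>F n in sequentially. \<epsilon> n < e / 2"
    by (rule order_tendstoD(2)[OF \<open>\<epsilon> \<longlonglongrightarrow> 0\<close>]) (use \<open>0 < e\<close> in simp)
  moreover have "\<forall>\<^sub>F n in sequentially. \<forall>s\<in>S. dist (y n s) (w s) < d"
    using uniform_limitD[OF lim \<open>0 < d\<close>] .
  ultimately show "\<forall>\<^sub>F n in sequentially. \<forall>s\<in>S. dist (D n s) (G (w s)) < e"
  proof eventually_elim
    case (elim n)
    show ?case
    proof
      fix s assume "s \<in> S"
      have "norm (D n s - G (w s)) \<le> norm (D n s - G (y n s)) + norm (G (y n s) - G (w s))"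
        by (rule norm_diff_triangle_le[OF order_refl order_refl])
      moreover have "norm (G (y n s) - G (w s)) < e / 2"
        using d[of "y n s" "w s"] inY \<open>s \<in> S\<close> elim by (simp add: dist_norm)
      moreover have "norm (D n s - G (y n s)) < e / 2"
        using D[OF \<open>s \<in> S\<close>, of n] elim by linarith
      ultimately show "dist (D n s) (G (w s)) < e"
        by (simp add: dist_norm)
    qed
  qed
qed

lemma has_vector_derivative_uniform_limit:
  fixes y :: "nat \<Rightarrow> real \<Rightarrow> 'a::banach"
  assumes "convex S" "t \<in> S"
    and der: "\<And>n s. s \<in> S \<Longrightarrow> (y n has_vector_derivative D n s) (at s within S)"
    and D_lim: "uniform_limit S D V sequentially"
    and lim: "\<And>s. s \<in> S \<Longrightarrow> (\<lambda>n. y n s) \<longlonglongrightarrow> w s"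
  shows "(w has_vector_derivative V t) (at t within S)"
proof -
  have "\<exists>v. \<forall>s\<in>S. (\<lambda>n. y n s) \<longlonglongrightarrow> v s \<and> (v has_derivative (\<lambda>h. h *\<^sub>R V s)) (at s within S)"
  proof (rule has_derivative_sequence[where f' = "\<lambda>n s h. h *\<^sub>R D n s", OF \<open>convex S\<close>])
    show "(y n has_derivative (\<lambda>h. h *\<^sub>R D n s)) (at s within S)" if "s \<in> S" for n s
      using der[OF that] by (simp add: has_vector_derivative_def)
    show "\<forall>\<^sub>F n in sequentially. \<forall>s\<in>S. \<forall>h. norm (h *\<^sub>R D n s - h *\<^sub>R V s) \<le> e * norm h"
      if "0 < e" for e
      using uniform_limitD[OF D_lim \<open>0 < e\<close>]
    proof eventually_elim
      case (elim n)
      show ?case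
      proof (intro ballI allI)
        fix s h assume "s \<in> S"
        with elim have "norm (D n s - V s) \<le> e"
          by (simp add: dist_norm less_imp_le)
        then have "norm (h *\<^sub>R (D n s - V s)) \<le> norm h * e"
          by (simp add: mult_left_mono)
        then show "norm (h *\<^sub>R D n s - h *\<^sub>R V s) \<le> e * norm h"
          by (simp add: scaleR_diff_right mult.commute)
      qed
    qed
    show "t \<in> S"
      by fact
    show "(\<lambda>n. y n t) \<longlonglongrightarrow> w t"
      by (rule lim) fact
  qed
  then obtain v where v: "\<And>s. s \<in> S \<Longrightarrow> (\<lambda>n. y n s) \<longlonglongrightarrow> v s"
    and "(v has_derivative (\<lambda>h. h *\<^sub>R V t)) (at t within S)"
    using \<open>t \<in> S\<close> by blast
  moreover have "w s = v s" if "s \<in> S" for s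
    using lim[OF that] v[OF that] by (rule LIMSEQ_unique)
  ultimately show ?thesis
    unfolding has_vector_derivative_def using \<open>t \<in> S\<close> by (blast intro: has_derivative_transform)
qed

lemma uniform_limit_of_approx_solutions:
  fixes G :: "'b::euclidean_space \<Rightarrow> 'b"
  assumes "compact Y" "continuous_on Y G"
    and approx: "\<And>n. approx_solution G Y (\<epsilon> n) (y n)" and "\<epsilon> \<longlonglongrightarrow> 0"
    and lim: "\<And>K. uniform_limit {0..K} y w sequentially"
  shows "is_solution (\<lambda>z t. G z) Y w (w 0) 0"
  unfolding is_solution_def
proof (intro conjI allI impI)
  have conv: "(\<lambda>n. y n s) \<longlonglongrightarrow> w s" if "0 \<le> s" for s
    using tendsto_uniform_limitI[OF lim[of s]] that by simp
  have y_in: "y n s \<in> Y" if "0 \<le> s" for n s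
    using approx_solutionD[OF approx that] by metis
  have w_in: "w s \<in> Y" if "0 \<le> s" for s
    using compact_imp_closed[OF \<open>compact Y\<close>] _ _ conv[OF that]
    by (rule Lim_in_closed_set) (simp_all add: y_in[OF that])
  fix t :: real assume "0 \<le> t"
  then show "w t \<in> Y"
    by (rule w_in)
  define D where "D n s = (SOME v. (y n has_vector_derivative v) (at s within {0..}) \<and> norm (v - G (y n s)) \<le> \<epsilon> n)"
    for n s
  have D: "(y n has_vector_derivative D n s) (at s within {0..}) \<and> norm (D n s - G (y n s)) \<le> \<epsilon> n"
    if "0 \<le> s" for n s
    unfolding D_def by (rule someI_ex) (use approx[of n] that in \<open>auto simp: approx_solution_def\<close>)
  \<comment> \<open>Uniform convergence only holds on bounded intervals; t is interior to {..<K}.\<close>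
  define K where "K = t + 1"
  have "(w has_vector_derivative G (w t)) (at t within {0..K})"
  proof (rule has_vector_derivative_uniform_limit[where D = D])
    show "(y n has_vector_derivative D n s) (at s within {0..K})" if "s \<in> {0..K}" for n s
      using D[of s n] that has_vector_derivative_within_subset[of "y n" _ s "{0..}" "{0..K}"] by auto
    show "uniform_limit {0..K} D (\<lambda>s. G (w s)) sequentially"
      by (rule uniform_limit_of_approx_velocities[OF assms(1,2) _ _ _ \<open>\<epsilon> \<longlonglongrightarrow> 0\<close> lim])
        (use y_in w_in D in auto)
  qed (use \<open>0 \<le> t\<close> conv in \<open>auto simp: K_def\<close>)
  moreover have "at t within {0..} = at t within {0..K}"
    by (rule at_within_nhd[of _ "{..<K}"]) (auto simp: K_def)
  ultimately show "(w has_vector_derivative G (w t)) (at t within {0..})"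
    by simp
qed simp

lemma approx_solutions_convergent_subsequence:
  fixes G :: "'b::euclidean_space \<Rightarrow> 'b"
  assumes "compact Y" "continuous_on Y G"
    and approx: "\<And>n. approx_solution G Y (\<epsilon> n) (y n)" and "\<epsilon> \<longlonglongrightarrow> 0"
  obtains r w where "strict_mono r" "is_solution (\<lambda>z t. G z) Y w (w 0) 0"
    "\<And>K. uniform_limit {0..K} (y \<circ> r) w sequentially"
proof -
  obtain M where M: "\<And>z. z \<in> Y \<Longrightarrow> norm (G z) \<le> M"
    using compact_imp_bounded[OF compact_continuous_image[OF assms(2,1)]]
    unfolding bounded_iff by auto
  obtain B where B: "\<And>z. z \<in> Y \<Longrightarrow> norm z \<le> B"
    using compact_imp_bounded[OF \<open>compact Y\<close>] unfolding bounded_iff by auto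
  obtain E where E: "\<And>n. \<epsilon> n \<le> E"
    using convergent_imp_Bseq[OF convergentI[OF \<open>\<epsilon> \<longlonglongrightarrow> 0\<close>]]
    by (elim BseqE) (auto intro: order_trans[OF abs_ge_self])
  have "(M + E)-lipschitz_on {0..} (y n)" for n
    using approx_solution_lipschitz[OF approx M] by (rule lipschitz_on_mono) (simp_all add: E)
  moreover have "norm (y n t) \<le> B" if "0 \<le> t" for n t
    using approx_solutionD[OF approx that] B by metis
  ultimately obtain r w where "strict_mono r" and lim: "\<And>K. uniform_limit {0..K} (y \<circ> r) w sequentially"
    using Arzela_Ascoli_halfline by metis
  moreover have "is_solution (\<lambda>z t. G z) Y w (w 0) 0"
  proof (rule uniform_limit_of_approx_solutions[OF assms(1,2)])
    show "approx_solution G Y ((\<epsilon> \<circ> r) n) ((y \<circ> r) n)" for n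
      by (simp add: approx)
    show "(\<epsilon> \<circ> r) \<longlonglongrightarrow> 0"
      by (rule LIMSEQ_subseq_LIMSEQ[OF \<open>\<epsilon> \<longlonglongrightarrow> 0\<close> \<open>strict_mono r\<close>])
  qed (rule lim)
  ultimately show ?thesis
    using that by blast
qed

section \<open>Robustness of uniform global asymptotic stability\<close>

lemma gas_stableD:
  assumes "gas h D d zstar" "0 < \<eta>"
  obtains \<delta> where "0 < \<delta>"
    "\<And>z z0 t0 t. 0 \<le> t0 \<Longrightarrow> is_solution h D z z0 t0 \<Longrightarrow> d z0 < \<delta> \<Longrightarrow> t0 \<le> t \<Longrightarrow> d (z t) < \<eta>"
  using assms unfolding gas_def by metis

lemma gas_attractiveD:
  assumes "gas h D d zstar" "0 < \<eta>" "0 < \<rho>"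
  obtains T where
    "\<And>z z0 t0 t. 0 \<le> t0 \<Longrightarrow> is_solution h D z z0 t0 \<Longrightarrow> d z0 < \<rho> \<Longrightarrow> t0 + T \<le> t \<Longrightarrow> d (z t) < \<eta>"
  using assms unfolding gas_def by metis

lemma approx_solutions_attracted:
  fixes G :: "'b::euclidean_space \<Rightarrow> 'b"
  assumes "compact Y" "continuous_on Y G"
    and gas: "gas (\<lambda>z t. G z) Y (\<lambda>z. norm (z - ystar)) ystar" and "0 < \<eta>"
  obtains T \<epsilon> where "0 \<le> T" "0 < \<epsilon>" "\<And>y. approx_solution G Y \<epsilon> y \<Longrightarrow> norm (y T - ystar) < \<eta>"
proof -
  obtain \<rho> where "0 < \<rho>" and \<rho>: "Y \<subseteq> ball ystar \<rho>"
    using bounded_subset_ballD[OF compact_imp_bounded[OF \<open>compact Y\<close>]] by blast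
  obtain T0 where T0: "\<And>z z0 t0 t. 0 \<le> t0 \<Longrightarrow> is_solution (\<lambda>z t. G z) Y z z0 t0 \<Longrightarrow>
      norm (z0 - ystar) < \<rho> \<Longrightarrow> t0 + T0 \<le> t \<Longrightarrow> norm (z t - ystar) < \<eta> / 2"
    using gas_attractiveD[OF gas _ \<open>0 < \<rho>\<close>, of "\<eta> / 2"] \<open>0 < \<eta>\<close> by auto
  define T where "T = max T0 0"
  have "\<exists>\<epsilon>>0. \<forall>y. approx_solution G Y \<epsilon> y \<longrightarrow> norm (y T - ystar) < \<eta>"
  proof (rule ccontr)
    assume "\<not> ?thesis"
    then have "\<forall>n. \<exists>y. approx_solution G Y (inverse (Suc n)) y \<and> \<not> norm (y T - ystar) < \<eta>"
      by (metis of_nat_0_less_iff positive_imp_inverse_positive zero_less_Suc)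
    then obtain ys where ys: "\<And>n. approx_solution G Y (inverse (Suc n)) (ys n)"
      and far: "\<And>n. \<not> norm (ys n T - ystar) < \<eta>"
      by metis
    obtain r w where sol: "is_solution (\<lambda>z t. G z) Y w (w 0) 0"
      and lim: "\<And>K. uniform_limit {0..K} (ys \<circ> r) w sequentially"
      using approx_solutions_convergent_subsequence[OF assms(1,2) ys LIMSEQ_inverse_real_of_nat] by metis
    have "w 0 \<in> Y"
      using sol unfolding is_solution_def by auto
    with \<rho> have "norm (w 0 - ystar) < \<rho>"
      by (auto simp: dist_norm norm_minus_commute)
    then have "norm (w T - ystar) < \<eta> / 2"
      using T0[OF _ sol] by (simp add: T_def)
    moreover have "(\<lambda>n. (ys \<circ> r) n T) \<longlonglongrightarrow> w T"
      by (rule tendsto_uniform_limitI[OF lim[of T]]) (simp add: T_def)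
    then have "\<forall>\<^sub>F n in sequentially. dist ((ys \<circ> r) n T) (w T) < \<eta> / 2"
      by (rule tendstoD) (use \<open>0 < \<eta>\<close> in simp)
    then obtain n where "norm (ys (r n) T - w T) < \<eta> / 2"
      by (auto simp: eventually_sequentially dist_norm)
    ultimately show False
      using far[of "r n"] norm_diff_triangle_less by fastforce
  qed
  moreover have "0 \<le> T"
    by (simp add: T_def)
  ultimately show ?thesis
    using that by blast
qed

lemma approx_solutions_stable:
  fixes G :: "'b::euclidean_space \<Rightarrow> 'b"
  assumes "compact Y" "continuous_on Y G"
    and gas: "gas (\<lambda>z t. G z) Y (\<lambda>z. norm (z - ystar)) ystar" and "0 < \<eta>"
  obtains \<epsilon> \<delta> where "0 < \<epsilon>" "0 < \<delta>"
    "\<And>y t. approx_solution G Y \<epsilon> y \<Longrightarrow> norm (y 0 - ystar) < \<delta> \<Longrightarrow> t \<in> {0..T} \<Longrightarrow> norm (y t - ystar) < \<eta>"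
proof -
  obtain \<delta>0 where "0 < \<delta>0" and \<delta>0: "\<And>z z0 t0 t. 0 \<le> t0 \<Longrightarrow> is_solution (\<lambda>z t. G z) Y z z0 t0 \<Longrightarrow>
      norm (z0 - ystar) < \<delta>0 \<Longrightarrow> t0 \<le> t \<Longrightarrow> norm (z t - ystar) < \<eta> / 2"
    using gas_stableD[OF gas, of "\<eta> / 2"] \<open>0 < \<eta>\<close> by auto
  have "\<exists>\<epsilon>>0. \<exists>\<delta>>0. \<forall>y. approx_solution G Y \<epsilon> y \<longrightarrow> norm (y 0 - ystar) < \<delta> \<longrightarrow>
      (\<forall>t\<in>{0..T}. norm (y t - ystar) < \<eta>)"
  proof (rule ccontr)
    assume "\<not> ?thesis"
    then have "\<forall>n. \<exists>y. approx_solution G Y (inverse (Suc n)) y \<and> norm (y 0 - ystar) < inverse (Suc n) \<and>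
        (\<exists>t\<in>{0..T}. \<not> norm (y t - ystar) < \<eta>)"
      by (metis of_nat_0_less_iff positive_imp_inverse_positive zero_less_Suc)
    then obtain ys ts where ys: "\<And>n. approx_solution G Y (inverse (Suc n)) (ys n)"
      and start: "\<And>n. norm (ys n 0 - ystar) < inverse (Suc n)"
      and ts: "\<And>n. ts n \<in> {0..T}" and far: "\<And>n. \<not> norm (ys n (ts n) - ystar) < \<eta>"
      by metis
    obtain r w where "strict_mono r" and sol: "is_solution (\<lambda>z t. G z) Y w (w 0) 0"
      and lim: "\<And>K. uniform_limit {0..K} (ys \<circ> r) w sequentially"
      using approx_solutions_convergent_subsequence[OF assms(1,2) ys LIMSEQ_inverse_real_of_nat] by metis
    have "(\<lambda>n. ys n 0 - ystar) \<longlonglongrightarrow> 0"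
    proof (rule Lim_null_comparison[OF _ LIMSEQ_inverse_real_of_nat])
      show "\<forall>\<^sub>F n in sequentially. norm (ys n 0 - ystar) \<le> inverse (real (Suc n))"
        using start by (simp add: less_imp_le)
    qed
    then have "(\<lambda>n. ys (r n) 0) \<longlonglongrightarrow> ystar"
      using LIMSEQ_subseq_LIMSEQ[OF _ \<open>strict_mono r\<close>] by (simp add: LIM_zero_iff o_def)
    moreover have "(\<lambda>n. ys (r n) 0) \<longlonglongrightarrow> w 0"
      using tendsto_uniform_limitI[OF lim[of 0]] by simp
    ultimately have "ystar = w 0"
      by (rule LIMSEQ_unique)
    then have "norm (w 0 - ystar) < \<delta>0"
      using \<open>0 < \<delta>0\<close> by simp
    then have near: "norm (w t - ystar) < \<eta> / 2" if "0 \<le> t" for t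
      using \<delta>0[OF _ sol] that by simp
    have "\<forall>\<^sub>F n in sequentially. \<forall>t\<in>{0..T}. dist ((ys \<circ> r) n t) (w t) < \<eta> / 2"
      by (rule uniform_limitD[OF lim]) (use \<open>0 < \<eta>\<close> in simp)
    then obtain n where "\<forall>t\<in>{0..T}. norm (ys (r n) t - w t) < \<eta> / 2"
      by (auto simp: eventually_sequentially dist_norm)
    then show False
      using far[of "r n"] ts[of "r n"] near[of "ts (r n)"] norm_diff_triangle_less by fastforce
  qed
  then show ?thesis
    using that by blast
qed

lemma approx_solutions_uniformly_attracted:
  fixes G :: "'b::euclidean_space \<Rightarrow> 'b"
  assumes "compact Y" "continuous_on Y G"
    and "gas (\<lambda>z t. G z) Y (\<lambda>z. norm (z - ystar)) ystar" and "0 < \<eta>"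
  obtains \<epsilon> \<delta> T where "0 < \<epsilon>" "0 < \<delta>"
    "\<And>y t. approx_solution G Y \<epsilon> y \<Longrightarrow> T \<le> t \<Longrightarrow> norm (y t - ystar) < \<eta>"
    "\<And>y t. approx_solution G Y \<epsilon> y \<Longrightarrow> norm (y 0 - ystar) < \<delta> \<Longrightarrow> 0 \<le> t \<Longrightarrow> norm (y t - ystar) < \<eta>"
proof -
  obtain T \<epsilon>1 where "0 \<le> T" "0 < \<epsilon>1"
    and attracted: "\<And>y. approx_solution G Y \<epsilon>1 y \<Longrightarrow> norm (y T - ystar) < \<eta>"
    using approx_solutions_attracted[OF assms] by metis
  obtain \<epsilon>2 \<delta> where "0 < \<epsilon>2" "0 < \<delta>" and stable:
    "\<And>y t. approx_solution G Y \<epsilon>2 y \<Longrightarrow> norm (y 0 - ystar) < \<delta> \<Longrightarrow> t \<in> {0..T} \<Longrightarrow> norm (y t - ystar) < \<eta>"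
    using approx_solutions_stable[OF assms] by metis
  define \<epsilon> where "\<epsilon> = min \<epsilon>1 \<epsilon>2"
  have late: "norm (y t - ystar) < \<eta>" if "approx_solution G Y \<epsilon> y" "T \<le> t" for y t
  proof -
    have "approx_solution G Y \<epsilon>1 (\<lambda>s. y (t - T + s))"
      using approx_solution_shift[OF that(1), of "t - T"] \<open>T \<le> t\<close>
      by (auto elim: approx_solution_mono simp: \<epsilon>_def)
    from attracted[OF this] show ?thesis
      by simp
  qed
  have "norm (y t - ystar) < \<eta>" if "approx_solution G Y \<epsilon> y" "norm (y 0 - ystar) < \<delta>" "0 \<le> t" for y t
  proof (cases "t \<le> T")
    case True
    have "approx_solution G Y \<epsilon>2 y"
      using that(1) by (rule approx_solution_mono) (simp add: \<epsilon>_def)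
    with True that(2,3) show ?thesis
      by (simp add: stable)
  next
    case False
    with late that(1) show ?thesis
      by simp
  qed
  moreover have "0 < \<epsilon>"
    using \<open>0 < \<epsilon>1\<close> \<open>0 < \<epsilon>2\<close> by (simp add: \<epsilon>_def)
  ultimately show ?thesis
    using that \<open>0 < \<delta>\<close> late by blast
qed

section \<open>Lyapunov functions\<close>

lemma class_K_inf_less_iff:
  "class_K_inf \<alpha> \<Longrightarrow> 0 \<le> a \<Longrightarrow> 0 \<le> b \<Longrightarrow> \<alpha> a < \<alpha> b \<longleftrightarrow> a < b"
  unfolding class_K_inf_def by (metis atLeast_iff strict_mono_on_less)

lemma class_K_inf_mono: "class_K_inf \<alpha> \<Longrightarrow> 0 \<le> a \<Longrightarrow> a \<le> b \<Longrightarrow> \<alpha> a \<le> \<alpha> b"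
  unfolding class_K_inf_def by (metis atLeast_iff order_trans strict_mono_on_less_eq)

lemma class_K_inf_pos: "class_K_inf \<alpha> \<Longrightarrow> 0 < a \<Longrightarrow> 0 < \<alpha> a"
  using class_K_inf_less_iff[of \<alpha> 0 a] unfolding class_K_inf_def by simp

lemma class_K_inf_small:
  assumes "class_K_inf \<alpha>" "0 < e"
  obtains d where "0 < d" "\<And>r. 0 \<le> r \<Longrightarrow> r < d \<Longrightarrow> \<alpha> r < e"
proof -
  have "continuous_on {0..} \<alpha>" "\<alpha> 0 = 0"
    using assms(1) unfolding class_K_inf_def by auto
  then obtain d where "0 < d" and d: "\<And>r. r \<in> {0..} \<Longrightarrow> dist r 0 < d \<Longrightarrow> dist (\<alpha> r) 0 < e"
    using \<open>0 < e\<close> unfolding continuous_on_iff by (metis atLeast_iff order_refl)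
  show ?thesis
  proof (rule that[OF \<open>0 < d\<close>])
    show "\<alpha> r < e" if "0 \<le> r" "r < d" for r
      using d[of r] that by (simp add: dist_real_def abs_less_iff)
  qed
qed

definition lyapunov_descent ::
  "'a::real_inner set \<Rightarrow> 'a \<Rightarrow> ('a \<Rightarrow> 'a) \<Rightarrow> (real \<Rightarrow> real) \<Rightarrow> (real \<Rightarrow> 'a) \<Rightarrow> real \<Rightarrow> bool" where
  "lyapunov_descent X xstar DU \<sigma> x t0 \<longleftrightarrow>
     (\<forall>t\<ge>t0. x t \<in> X \<and>
        (\<exists>v. (x has_vector_derivative v) (at t within {t0..}) \<and> DU (x t) \<bullet> v \<le> - \<sigma> (norm (x t - xstar))))"

lemma lyapunov_descent_later:
  assumes "lyapunov_descent X xstar DU \<sigma> x t0" "t0 \<le> s"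
  shows "lyapunov_descent X xstar DU \<sigma> x s"
  unfolding lyapunov_descent_def
proof (intro allI impI)
  fix t assume "s \<le> t"
  with assms obtain v where "x t \<in> X" "DU (x t) \<bullet> v \<le> - \<sigma> (norm (x t - xstar))"
    and "(x has_vector_derivative v) (at t within {t0..})"
    unfolding lyapunov_descent_def by (meson order_trans)
  moreover have "{s..} \<subseteq> {t0..}"
    using \<open>t0 \<le> s\<close> by auto
  ultimately show "x t \<in> X \<and>
      (\<exists>v. (x has_vector_derivative v) (at t within {s..}) \<and> DU (x t) \<bullet> v \<le> - \<sigma> (norm (x t - xstar)))"
    by (blast intro: has_vector_derivative_within_subset)
qed

lemma candidate_lyapunovE:
  assumes "candidate_lyapunov X xstar U DU"
  obtains \<alpha>1 \<alpha>2 where "class_K_inf \<alpha>1" "class_K_inf \<alpha>2"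
    "\<And>x. x \<in> X \<Longrightarrow> \<alpha>1 (norm (x - xstar)) \<le> U x" "\<And>x. x \<in> X \<Longrightarrow> U x \<le> \<alpha>2 (norm (x - xstar))"
    "\<And>x. x \<in> X \<Longrightarrow> (U has_derivative (\<lambda>h. DU x \<bullet> h)) (at x within X)" "\<And>x. x \<in> X \<Longrightarrow> 0 \<le> U x"
  using assms unfolding candidate_lyapunov_def by metis

lemma lyapunov_descent_derivative:
  assumes dU: "\<And>x. x \<in> X \<Longrightarrow> (U has_derivative (\<lambda>h. DU x \<bullet> h)) (at x within X)"
    and descent: "lyapunov_descent X xstar DU \<sigma> x t0" and "t0 \<le> t"
  obtains d where "((\<lambda>t. U (x t)) has_real_derivative d) (at t within {t0..})"
    "d \<le> - \<sigma> (norm (x t - xstar))"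
proof -
  obtain v where "x t \<in> X" and v: "DU (x t) \<bullet> v \<le> - \<sigma> (norm (x t - xstar))"
    and "(x has_derivative (\<lambda>h. h *\<^sub>R v)) (at t within {t0..})"
    using descent \<open>t0 \<le> t\<close> unfolding lyapunov_descent_def has_vector_derivative_def by blast
  moreover have "(U has_derivative (\<lambda>h. DU (x t) \<bullet> h)) (at (x t) within x ` {t0..})"
    using descent dU[OF \<open>x t \<in> X\<close>] unfolding lyapunov_descent_def
    by (blast intro: has_derivative_subset)
  ultimately have "((\<lambda>t. U (x t)) has_derivative (\<lambda>h. DU (x t) \<bullet> (h *\<^sub>R v))) (at t within {t0..})"
    using diff_chain_within unfolding o_def by blast
  then have "((\<lambda>t. U (x t)) has_real_derivative DU (x t) \<bullet> v) (at t within {t0..})"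
    by (simp add: has_field_derivative_def mult.commute[of _ "DU (x t) \<bullet> v"])
  then show ?thesis
    using v by (rule that)
qed

lemma lyapunov_descent_decrease:
  assumes dU: "\<And>x. x \<in> X \<Longrightarrow> (U has_derivative (\<lambda>h. DU x \<bullet> h)) (at x within X)"
    and descent: "lyapunov_descent X xstar DU \<sigma> x t0" and "t0 \<le> a" "a \<le> b"
    and m: "\<And>s. a \<le> s \<Longrightarrow> s \<le> b \<Longrightarrow> m \<le> \<sigma> (norm (x s - xstar))"
  shows "U (x b) \<le> U (x a) - m * (b - a)"
proof -
  have "U (x b) + m * b \<le> U (x a) + m * a"
  proof (rule DERIV_nonpos_imp_decreasing_open[OF \<open>a \<le> b\<close>])
    fix s assume "a < s" "s < b"
    then obtain d where "((\<lambda>t. U (x t)) has_real_derivative d) (at s within {t0..})"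
      and "d \<le> - \<sigma> (norm (x s - xstar))"
      using lyapunov_descent_derivative[OF dU descent, of s] \<open>t0 \<le> a\<close> by auto
    moreover have "at s within {t0..} = at s"
      using \<open>a < s\<close> \<open>t0 \<le> a\<close> by (intro at_within_interior) simp
    ultimately have "((\<lambda>t. U (x t) + m * t) has_real_derivative d + m) (at s)"
      by (auto intro!: derivative_eq_intros)
    moreover have "d + m \<le> 0"
      using m[of s] \<open>a < s\<close> \<open>s < b\<close> \<open>d \<le> _\<close> by simp
    ultimately show "\<exists>y. ((\<lambda>t. U (x t) + m * t) has_real_derivative y) (at s) \<and> y \<le> 0"
      by blast
  next
    have "continuous (at s within {a..b}) (\<lambda>t. U (x t))" if "s \<in> {a..b}" for s
    proof (rule continuous_within_subset)
      show "continuous (at s within {t0..}) (\<lambda>t. U (x t))"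
        using lyapunov_descent_derivative[OF dU descent, of s] that \<open>t0 \<le> a\<close>
        by (metis DERIV_continuous atLeastAtMost_iff order_trans)
    qed (use \<open>t0 \<le> a\<close> in auto)
    then have "continuous_on {a..b} (\<lambda>t. U (x t))"
      by (simp add: continuous_on_eq_continuous_within)
    then show "continuous_on {a..b} (\<lambda>t. U (x t) + m * t)"
      by (intro continuous_intros)
  qed
  then show ?thesis
    by (simp add: algebra_simps)
qed

lemma lyapunov_descent_nonincreasing:
  assumes "\<And>x. x \<in> X \<Longrightarrow> (U has_derivative (\<lambda>h. DU x \<bullet> h)) (at x within X)"
    and "lyapunov_descent X xstar DU \<sigma> x t0" "pos_def_fun \<sigma>" "t0 \<le> a" "a \<le> b"
  shows "U (x b) \<le> U (x a)"
  using lyapunov_descent_decrease[OF assms(1,2,4,5), of 0] \<open>pos_def_fun \<sigma>\<close>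
  unfolding pos_def_fun_def by simp

lemma lyapunov_uniformly_stable:
  assumes lyap: "candidate_lyapunov X xstar U DU" and \<sigma>: "pos_def_fun \<sigma>" and "0 < \<eta>"
  obtains \<delta> where "0 < \<delta>" "\<And>x t0 t. lyapunov_descent X xstar DU \<sigma> x t0 \<Longrightarrow>
      norm (x t0 - xstar) < \<delta> \<Longrightarrow> t0 \<le> t \<Longrightarrow> norm (x t - xstar) < \<eta>"
proof -
  obtain \<alpha>1 \<alpha>2 where K1: "class_K_inf \<alpha>1" and K2: "class_K_inf \<alpha>2"
    and lower: "\<And>x. x \<in> X \<Longrightarrow> \<alpha>1 (norm (x - xstar)) \<le> U x"
    and upper: "\<And>x. x \<in> X \<Longrightarrow> U x \<le> \<alpha>2 (norm (x - xstar))"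
    and dU: "\<And>x. x \<in> X \<Longrightarrow> (U has_derivative (\<lambda>h. DU x \<bullet> h)) (at x within X)"
    using candidate_lyapunovE[OF lyap] by metis
  obtain \<delta> where "0 < \<delta>" and \<delta>: "\<And>r. 0 \<le> r \<Longrightarrow> r < \<delta> \<Longrightarrow> \<alpha>2 r < \<alpha>1 \<eta>"
    using class_K_inf_small[OF K2 class_K_inf_pos[OF K1 \<open>0 < \<eta>\<close>]] by metis
  show ?thesis
  proof (rule that[OF \<open>0 < \<delta>\<close>])
    fix x t0 t
    assume descent: "lyapunov_descent X xstar DU \<sigma> x t0" and start: "norm (x t0 - xstar) < \<delta>"
      and "t0 \<le> t"
    then have "x t0 \<in> X" "x t \<in> X"
      unfolding lyapunov_descent_def by auto
    then have "\<alpha>1 (norm (x t - xstar)) \<le> U (x t)"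
      by (simp add: lower)
    also have "\<dots> \<le> U (x t0)"
      using lyapunov_descent_nonincreasing[OF dU descent \<sigma> order_refl \<open>t0 \<le> t\<close>] .
    also have "\<dots> \<le> \<alpha>2 (norm (x t0 - xstar))"
      using \<open>x t0 \<in> X\<close> by (rule upper)
    also have "\<dots> < \<alpha>1 \<eta>"
      using \<delta> start by simp
    finally show "norm (x t - xstar) < \<eta>"
      using class_K_inf_less_iff[OF K1] \<open>0 < \<eta>\<close> by simp
  qed
qed

lemma lyapunov_descent_bounded:
  assumes lyap: "candidate_lyapunov X xstar U DU" and \<sigma>: "pos_def_fun \<sigma>"
  obtains R where "\<And>x t0 t. lyapunov_descent X xstar DU \<sigma> x t0 \<Longrightarrow>
      norm (x t0 - xstar) < \<rho> \<Longrightarrow> t0 \<le> t \<Longrightarrow> norm (x t - xstar) < R"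
proof -
  obtain \<alpha>1 \<alpha>2 where K1: "class_K_inf \<alpha>1" and K2: "class_K_inf \<alpha>2"
    and lower: "\<And>x. x \<in> X \<Longrightarrow> \<alpha>1 (norm (x - xstar)) \<le> U x"
    and upper: "\<And>x. x \<in> X \<Longrightarrow> U x \<le> \<alpha>2 (norm (x - xstar))"
    and dU: "\<And>x. x \<in> X \<Longrightarrow> (U has_derivative (\<lambda>h. DU x \<bullet> h)) (at x within X)"
    using candidate_lyapunovE[OF lyap] by metis
  obtain R where "0 \<le> R" "\<alpha>2 \<rho> < \<alpha>1 R"
    using K1 unfolding class_K_inf_def by blast
  show ?thesis
  proof (rule that)
    fix x t0 t
    assume descent: "lyapunov_descent X xstar DU \<sigma> x t0" and start: "norm (x t0 - xstar) < \<rho>"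
      and "t0 \<le> t"
    then have "x t0 \<in> X" "x t \<in> X"
      unfolding lyapunov_descent_def by auto
    then have "\<alpha>1 (norm (x t - xstar)) \<le> U (x t)"
      by (simp add: lower)
    also have "\<dots> \<le> U (x t0)"
      using lyapunov_descent_nonincreasing[OF dU descent \<sigma> order_refl \<open>t0 \<le> t\<close>] .
    also have "\<dots> \<le> \<alpha>2 (norm (x t0 - xstar))"
      using \<open>x t0 \<in> X\<close> by (rule upper)
    also have "\<dots> \<le> \<alpha>2 \<rho>"
      using class_K_inf_mono[OF K2 norm_ge_zero less_imp_le[OF start]] .
    also have "\<dots> < \<alpha>1 R"
      by fact
    finally show "norm (x t - xstar) < R"
      using class_K_inf_less_iff[OF K1] \<open>0 \<le> R\<close> by simp
  qed
qed

lemma lyapunov_descent_reaches_ball: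
  assumes lyap: "candidate_lyapunov X xstar U DU" and \<sigma>: "pos_def_fun \<sigma>" and "0 < \<delta>"
  obtains T where "0 \<le> T" "\<And>x t0. lyapunov_descent X xstar DU \<sigma> x t0 \<Longrightarrow>
      norm (x t0 - xstar) < \<rho> \<Longrightarrow> \<exists>s. t0 \<le> s \<and> s \<le> t0 + T \<and> norm (x s - xstar) < \<delta>"
proof -
  obtain \<alpha>1 \<alpha>2 :: "real \<Rightarrow> real" where K2: "class_K_inf \<alpha>2"
    and upper: "\<And>x. x \<in> X \<Longrightarrow> U x \<le> \<alpha>2 (norm (x - xstar))"
    and dU: "\<And>x. x \<in> X \<Longrightarrow> (U has_derivative (\<lambda>h. DU x \<bullet> h)) (at x within X)"
    and U_nonneg: "\<And>x. x \<in> X \<Longrightarrow> 0 \<le> U x"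
    using candidate_lyapunovE[OF lyap] by metis
  obtain R where bounded: "\<And>x t0 t. lyapunov_descent X xstar DU \<sigma> x t0 \<Longrightarrow>
      norm (x t0 - xstar) < \<rho> \<Longrightarrow> t0 \<le> t \<Longrightarrow> norm (x t - xstar) < R"
    using lyapunov_descent_bounded[OF lyap \<sigma>] by metis
  obtain c where "c \<in> {\<delta>..max R \<delta>}" and c: "\<And>r. r \<in> {\<delta>..max R \<delta>} \<Longrightarrow> \<sigma> c \<le> \<sigma> r"
  proof -
    have "continuous_on {\<delta>..max R \<delta>} \<sigma>"
      using \<sigma> \<open>0 < \<delta>\<close> unfolding pos_def_fun_def by (auto elim: continuous_on_subset)
    then show ?thesis
      using continuous_attains_inf[of "{\<delta>..max R \<delta>}" \<sigma>] that by auto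
  qed
  define m where "m = \<sigma> c"
  have "0 < m"
    using \<sigma> \<open>c \<in> {\<delta>..max R \<delta>}\<close> \<open>0 < \<delta>\<close> unfolding m_def pos_def_fun_def by auto
  \<comment> \<open>U starts below \<alpha>2 \<rho> and decreases at rate at least m while x stays outside the
    \<delta>-ball, so it would be negative at time T.\<close>
  define T where "T = \<bar>\<alpha>2 \<rho>\<bar> / m + 1"
  have "0 \<le> T"
    using \<open>0 < m\<close> by (simp add: T_def)
  show ?thesis
  proof (rule that[OF \<open>0 \<le> T\<close>], rule ccontr)
    fix x t0
    assume descent: "lyapunov_descent X xstar DU \<sigma> x t0" and start: "norm (x t0 - xstar) < \<rho>"
      and "\<not> (\<exists>s. t0 \<le> s \<and> s \<le> t0 + T \<and> norm (x s - xstar) < \<delta>)"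
    then have "m \<le> \<sigma> (norm (x s - xstar))" if "t0 \<le> s" "s \<le> t0 + T" for s
      using c[of "norm (x s - xstar)"] bounded[OF descent start that(1)] that unfolding m_def by force
    then have "U (x (t0 + T)) \<le> U (x t0) - m * T"
      using lyapunov_descent_decrease[OF dU descent order_refl, of "t0 + T" m] \<open>0 \<le> T\<close> by simp
    moreover have "x t0 \<in> X" "x (t0 + T) \<in> X"
      using descent \<open>0 \<le> T\<close> unfolding lyapunov_descent_def by simp_all
    moreover have "\<alpha>2 (norm (x t0 - xstar)) \<le> \<alpha>2 \<rho>"
      using class_K_inf_mono[OF K2 norm_ge_zero less_imp_le[OF start]] .
    moreover have "m * T = \<bar>\<alpha>2 \<rho>\<bar> + m"
      using \<open>0 < m\<close> by (simp add: T_def field_simps)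
    ultimately show False
      using upper[of "x t0"] U_nonneg[of "x (t0 + T)"] \<open>0 < m\<close> by linarith
  qed
qed

lemma lyapunov_uniformly_attractive:
  assumes lyap: "candidate_lyapunov X xstar U DU" and \<sigma>: "pos_def_fun \<sigma>" and "0 < \<eta>"
  obtains T where "\<And>x t0 t. lyapunov_descent X xstar DU \<sigma> x t0 \<Longrightarrow>
      norm (x t0 - xstar) < \<rho> \<Longrightarrow> t0 + T \<le> t \<Longrightarrow> norm (x t - xstar) < \<eta>"
proof -
  obtain \<delta> where "0 < \<delta>" and stable: "\<And>x t0 t. lyapunov_descent X xstar DU \<sigma> x t0 \<Longrightarrow>
      norm (x t0 - xstar) < \<delta> \<Longrightarrow> t0 \<le> t \<Longrightarrow> norm (x t - xstar) < \<eta>"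
    using lyapunov_uniformly_stable[OF lyap \<sigma> \<open>0 < \<eta>\<close>] by metis
  obtain T where "0 \<le> T" and reach: "\<And>x t0. lyapunov_descent X xstar DU \<sigma> x t0 \<Longrightarrow>
      norm (x t0 - xstar) < \<rho> \<Longrightarrow> \<exists>s. t0 \<le> s \<and> s \<le> t0 + T \<and> norm (x s - xstar) < \<delta>"
    using lyapunov_descent_reaches_ball[OF lyap \<sigma> \<open>0 < \<delta>\<close>] by metis
  show ?thesis
  proof (rule that)
    fix x t0 t
    assume descent: "lyapunov_descent X xstar DU \<sigma> x t0" and "norm (x t0 - xstar) < \<rho>"
      and "t0 + T \<le> t"
    then obtain s where "t0 \<le> s" "s \<le> t0 + T" "norm (x s - xstar) < \<delta>"
      using reach by blast
    then show "norm (x t - xstar) < \<eta>"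
      using stable[OF lyapunov_descent_later[OF descent \<open>t0 \<le> s\<close>]] \<open>t0 + T \<le> t\<close> by simp
  qed
qed

section \<open>Cascades\<close>

locale cascade_system =
  fixes X :: "'a::euclidean_space set" and Y :: "'b::euclidean_space set"
    and f :: "'a \<Rightarrow> 'b \<Rightarrow> 'a" and g :: "'a \<Rightarrow> 'b \<Rightarrow> 'b"
    and xstar :: 'a and ystar :: 'b
    and U :: "'a \<Rightarrow> real" and DU :: "'a \<Rightarrow> 'a" and \<sigma> :: "real \<Rightarrow> real"
  assumes compact_Y: "compact Y"
    and xstar_in_X: "xstar \<in> X"
    and continuous_g: "continuous_on (X \<times> Y) (\<lambda>z. g (fst z) (snd z))"
    and nominal_gas: "gas (\<lambda>y t. g xstar y) Y (\<lambda>y. norm (y - ystar)) ystar"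
    and lyapunov: "candidate_lyapunov X xstar U DU"
    and \<sigma>_pos_def: "pos_def_fun \<sigma>"
    and descent: "\<And>x y. x \<in> X \<Longrightarrow> y \<in> Y \<Longrightarrow> \<sigma> (norm (x - xstar)) \<le> - (DU x \<bullet> f x y)"
begin

abbreviation solution :: "(real \<Rightarrow> 'a \<times> 'b) \<Rightarrow> 'a \<times> 'b \<Rightarrow> real \<Rightarrow> bool" where
  "solution z z0 t0 \<equiv> is_solution (\<lambda>z t. (f (fst z) (snd z), g (fst z) (snd z))) (X \<times> Y) z z0 t0"

abbreviation deviation :: "'a \<times> 'b \<Rightarrow> real" where
  "deviation z \<equiv> norm (fst z - xstar) + norm (snd z - ystar)"

lemma continuous_nominal: "continuous_on Y (g xstar)"
proof -
  have "continuous_on Y (\<lambda>y. (\<lambda>z. g (fst z) (snd z)) (xstar, y))"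
    by (rule continuous_on_compose2[OF continuous_g]) (use xstar_in_X in \<open>auto intro!: continuous_intros\<close>)
  then show ?thesis
    by simp
qed

lemma solution_fst_descent:
  assumes "solution z z0 t0"
  shows "lyapunov_descent X xstar DU \<sigma> (\<lambda>t. fst (z t)) t0"
  unfolding lyapunov_descent_def
proof (intro allI impI conjI)
  fix t assume "t0 \<le> t"
  with assms have zt: "z t \<in> X \<times> Y"
    and dz: "(z has_vector_derivative (f (fst (z t)) (snd (z t)), g (fst (z t)) (snd (z t)))) (at t within {t0..})"
    unfolding is_solution_def by auto
  then show "fst (z t) \<in> X"
    by (simp add: mem_Times_iff)
  have "DU (fst (z t)) \<bullet> f (fst (z t)) (snd (z t)) \<le> - \<sigma> (norm (fst (z t) - xstar))"
    using descent zt by (force simp: mem_Times_iff)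
  with has_vector_derivative_fst[OF dz]
  show "\<exists>v. ((\<lambda>t. fst (z t)) has_vector_derivative v) (at t within {t0..}) \<and>
      DU (fst (z t)) \<bullet> v \<le> - \<sigma> (norm (fst (z t) - xstar))"
    by auto
qed

lemma solution_snd_approx_solution:
  assumes "0 < \<epsilon>"
  obtains r where "0 < r" "\<And>z z0 t0 s. solution z z0 t0 \<Longrightarrow> t0 \<le> s \<Longrightarrow>
      \<forall>t\<ge>s. norm (fst (z t) - xstar) < r \<Longrightarrow> approx_solution (g xstar) Y \<epsilon> (\<lambda>t. snd (z (s + t)))"
proof -
  obtain r where "0 < r"
    and r: "\<And>x y. x \<in> X \<Longrightarrow> y \<in> Y \<Longrightarrow> norm (x - xstar) < r \<Longrightarrow> norm (g x y - g xstar y) < \<epsilon>"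
    using uniformly_close_on_compact_fibre[OF compact_Y continuous_g xstar_in_X \<open>0 < \<epsilon>\<close>] by metis
  show ?thesis
  proof (rule that[OF \<open>0 < r\<close>])
    fix z z0 t0 s
    assume sol: "solution z z0 t0" and "t0 \<le> s" and near: "\<forall>t\<ge>s. norm (fst (z t) - xstar) < r"
    show "approx_solution (g xstar) Y \<epsilon> (\<lambda>t. snd (z (s + t)))"
      unfolding approx_solution_def
    proof (intro allI impI conjI)
      fix t :: real assume "0 \<le> t"
      with sol \<open>t0 \<le> s\<close> have zt: "z (s + t) \<in> X \<times> Y"
        and dz: "(z has_vector_derivative (f (fst (z (s + t))) (snd (z (s + t))), g (fst (z (s + t))) (snd (z (s + t)))))
          (at (s + t) within {t0..})"
        unfolding is_solution_def by auto
      then show "snd (z (s + t)) \<in> Y"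
        by (simp add: mem_Times_iff)
      have "norm (g (fst (z (s + t))) (snd (z (s + t))) - g xstar (snd (z (s + t)))) < \<epsilon>"
        using r zt near \<open>0 \<le> t\<close> by (simp add: mem_Times_iff)
      moreover have "((\<lambda>t. snd (z (s + t))) has_vector_derivative g (fst (z (s + t))) (snd (z (s + t))))
          (at t within {0..})"
        using has_vector_derivative_snd[OF has_vector_derivative_shift[OF dz \<open>t0 \<le> s\<close>]] by simp
      ultimately show "\<exists>v. ((\<lambda>t. snd (z (s + t))) has_vector_derivative v) (at t within {0..}) \<and>
          norm (v - g xstar (snd (z (s + t)))) \<le> \<epsilon>"
        by (blast intro: less_imp_le)
    qed
  qed
qed

lemma uniformly_stable:
  assumes "0 < \<eta>"
  shows "\<exists>\<delta>>0. \<forall>z z0 t0. 0 \<le> t0 \<longrightarrow> solution z z0 t0 \<longrightarrow> deviation z0 < \<delta> \<longrightarrow>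
    (\<forall>t\<ge>t0. deviation (z t) < \<eta>)"
proof -
  obtain \<epsilon> \<delta>y T where "0 < \<epsilon>" "0 < \<delta>y"
    and "\<And>y t. approx_solution (g xstar) Y \<epsilon> y \<Longrightarrow> T \<le> t \<Longrightarrow> norm (y t - ystar) < \<eta> / 2"
    and y_stable: "\<And>y t. approx_solution (g xstar) Y \<epsilon> y \<Longrightarrow>
      norm (y 0 - ystar) < \<delta>y \<Longrightarrow> 0 \<le> t \<Longrightarrow> norm (y t - ystar) < \<eta> / 2"
    by (fact approx_solutions_uniformly_attracted[OF compact_Y continuous_nominal nominal_gas
          half_gt_zero[OF \<open>0 < \<eta>\<close>]])
  obtain r where "0 < r" and approx: "\<And>z z0 t0 s. solution z z0 t0 \<Longrightarrow> t0 \<le> s \<Longrightarrow>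
      \<forall>t\<ge>s. norm (fst (z t) - xstar) < r \<Longrightarrow> approx_solution (g xstar) Y \<epsilon> (\<lambda>t. snd (z (s + t)))"
    by (fact solution_snd_approx_solution[OF \<open>0 < \<epsilon>\<close>])
  have "0 < min r (\<eta> / 2)"
    using \<open>0 < r\<close> \<open>0 < \<eta>\<close> by simp
  obtain \<delta>x where "0 < \<delta>x" and x_stable: "\<And>x t0 t. lyapunov_descent X xstar DU \<sigma> x t0 \<Longrightarrow>
      norm (x t0 - xstar) < \<delta>x \<Longrightarrow> t0 \<le> t \<Longrightarrow> norm (x t - xstar) < min r (\<eta> / 2)"
    by (fact lyapunov_uniformly_stable[OF lyapunov \<sigma>_pos_def \<open>0 < min r (\<eta> / 2)\<close>])
  have "deviation (z t) < \<eta>"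
    if sol: "solution z z0 t0" and start: "deviation z0 < \<delta>x" "deviation z0 < \<delta>y" and "t0 \<le> t"
    for z z0 t0 t
  proof -
    have "z t0 = z0"
      using sol unfolding is_solution_def by simp
    have x0: "norm (fst z0 - xstar) < \<delta>x" and y0: "norm (snd z0 - ystar) < \<delta>y"
      using start norm_ge_zero[of "fst z0 - xstar"] norm_ge_zero[of "snd z0 - ystar"] by linarith+
    have x_near: "norm (fst (z s) - xstar) < r" "norm (fst (z s) - xstar) < \<eta> / 2" if "t0 \<le> s" for s
      using x_stable[OF solution_fst_descent[OF sol] _ that] x0 \<open>z t0 = z0\<close> by simp_all
    have "approx_solution (g xstar) Y \<epsilon> (\<lambda>s. snd (z (t0 + s)))"
      using approx[OF sol order_refl] x_near(1) by simp
    with y0 \<open>z t0 = z0\<close> \<open>t0 \<le> t\<close> have "norm (snd (z t) - ystar) < \<eta> / 2"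
      using y_stable[of "\<lambda>s. snd (z (t0 + s))" "t - t0"] by simp
    with x_near(2)[OF \<open>t0 \<le> t\<close>] show ?thesis
      by simp
  qed
  with \<open>0 < \<delta>x\<close> \<open>0 < \<delta>y\<close> show ?thesis
    by (intro exI[of _ "min \<delta>x \<delta>y"]) auto
qed

lemma uniformly_attractive:
  assumes "0 < \<eta>" "0 < \<rho>"
  shows "\<exists>T. \<forall>z z0 t0. 0 \<le> t0 \<longrightarrow> solution z z0 t0 \<longrightarrow> deviation z0 < \<rho> \<longrightarrow>
    (\<forall>t\<ge>t0 + T. deviation (z t) < \<eta>)"
proof -
  obtain \<epsilon> \<delta> Ty where "0 < \<epsilon>" "0 < \<delta>"
    and y_attracted: "\<And>y t. approx_solution (g xstar) Y \<epsilon> y \<Longrightarrow> Ty \<le> t \<Longrightarrow> norm (y t - ystar) < \<eta> / 2"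
    and "\<And>y t. approx_solution (g xstar) Y \<epsilon> y \<Longrightarrow>
      norm (y 0 - ystar) < \<delta> \<Longrightarrow> 0 \<le> t \<Longrightarrow> norm (y t - ystar) < \<eta> / 2"
    by (fact approx_solutions_uniformly_attracted[OF compact_Y continuous_nominal nominal_gas
          half_gt_zero[OF \<open>0 < \<eta>\<close>]])
  obtain r where "0 < r" and approx: "\<And>z z0 t0 s. solution z z0 t0 \<Longrightarrow> t0 \<le> s \<Longrightarrow>
      \<forall>t\<ge>s. norm (fst (z t) - xstar) < r \<Longrightarrow> approx_solution (g xstar) Y \<epsilon> (\<lambda>t. snd (z (s + t)))"
    by (fact solution_snd_approx_solution[OF \<open>0 < \<epsilon>\<close>])
  have "0 < min r (\<eta> / 2)"
    using \<open>0 < r\<close> \<open>0 < \<eta>\<close> by simp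
  obtain Tx where x_attracted: "\<And>x t0 t. lyapunov_descent X xstar DU \<sigma> x t0 \<Longrightarrow>
      norm (x t0 - xstar) < \<rho> \<Longrightarrow> t0 + Tx \<le> t \<Longrightarrow> norm (x t - xstar) < min r (\<eta> / 2)"
    by (fact lyapunov_uniformly_attractive[OF lyapunov \<sigma>_pos_def \<open>0 < min r (\<eta> / 2)\<close>])
  define s0 where "s0 = max Tx 0"
  have "deviation (z t) < \<eta>"
    if sol: "solution z z0 t0" and start: "deviation z0 < \<rho>" and "t0 + (s0 + max Ty 0) \<le> t"
    for z z0 t0 t
  proof -
    have "z t0 = z0"
      using sol unfolding is_solution_def by simp
    have x0: "norm (fst z0 - xstar) < \<rho>"
      using start norm_ge_zero[of "snd z0 - ystar"] by linarith
    have x_near: "norm (fst (z s) - xstar) < r" "norm (fst (z s) - xstar) < \<eta> / 2" if "t0 + s0 \<le> s" for s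
      using x_attracted[OF solution_fst_descent[OF sol]] x0 \<open>z t0 = z0\<close> that by (simp_all add: s0_def)
    have "approx_solution (g xstar) Y \<epsilon> (\<lambda>s. snd (z (t0 + s0 + s)))"
      using approx[OF sol, of "t0 + s0"] x_near(1) by (simp add: s0_def)
    with \<open>t0 + (s0 + max Ty 0) \<le> t\<close> have "norm (snd (z t) - ystar) < \<eta> / 2"
      using y_attracted[of "\<lambda>s. snd (z (t0 + s0 + s))" "t - (t0 + s0)"] by simp
    moreover have "norm (fst (z t) - xstar) < \<eta> / 2"
      using x_near(2) \<open>t0 + (s0 + max Ty 0) \<le> t\<close> by simp
    ultimately show ?thesis
      by simp
  qed
  then show ?thesis
    by blast
qed

lemma equilibrium_gas:
  "gas (\<lambda>z t. (f (fst z) (snd z), g (fst z) (snd z))) (X \<times> Y) deviation (xstar, ystar)"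
proof -
  have "ystar \<in> Y"
    using nominal_gas unfolding gas_def by blast
  then show ?thesis
    unfolding gas_def using xstar_in_X uniformly_stable uniformly_attractive by auto
qed

end

theorem lemma5:
  fixes X :: "'a::euclidean_space set" and Y :: "'b::euclidean_space set"
    and f :: "'a \<Rightarrow> 'b \<Rightarrow> 'a" and g :: "'a \<Rightarrow> 'b \<Rightarrow> 'b"
    and xstar :: 'a and ystar :: 'b
    and U :: "'a \<Rightarrow> real" and DU :: "'a \<Rightarrow> 'a" and \<sigma> :: "real \<Rightarrow> real"
  assumes "compact Y"
    and "xstar \<in> X"
    and "C1_on (X \<times> Y) (\<lambda>z. f (fst z) (snd z))"
    and "C1_on (X \<times> Y) (\<lambda>z. g (fst z) (snd z))"
    and "gas (\<lambda>y t. g xstar y) Y (\<lambda>y. norm (y - ystar)) ystar"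
    and "candidate_lyapunov X xstar U DU"
    and "pos_def_fun \<sigma>"
    and "\<forall>x\<in>X. \<forall>y\<in>Y. \<sigma> (norm (x - xstar)) \<le> - (DU x \<bullet> f x y)"
  shows "gas (\<lambda>z t. (f (fst z) (snd z), g (fst z) (snd z))) (X \<times> Y)
             (\<lambda>z. norm (fst z - xstar) + norm (snd z - ystar)) (xstar, ystar)"
proof -
  have "continuous_on (X \<times> Y) (\<lambda>z. g (fst z) (snd z))"
    using assms(4) by (rule C1_on_imp_continuous_on)
  then interpret cascade_system X Y f g xstar ystar U DU \<sigma>
    using assms by unfold_locales auto
  show ?thesis
    by (rule equilibrium_gas)
qed

end
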